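(* Let $G$ be a graph and $\mathscr{C}$ a skew graph category such that $(G,\emptyset,\emptyset)\in\mathscr{C}$. Then for all $k,l\in\mathbb{N}_0$ the vector space $\mathscr{C}^G(k,l)$ has the linear basis $\{\hat T^{\mathbf{a}\mathbf{b}}_G\mid[\mathbf{a},\mathbf{b}]\in W^{\mathscr{C}}_G(k,l)\}$.
   Context: Graphs are finite, undirected, without multiple edges, loops allowed, up to isomorphism; $N_k$ is the edgeless graph on $k$ vertices; graph homomorphisms map edges (including loops) to edges. A vertex overlap of graphs $K,H$ is a subset $f\subset V(K)\times V(H)$ in which each vertex occurs at most once; $K\cup_fH$ is the quotient of $K\sqcup H$ identifying $v$ with $w$ for $(v,w)\in f$ (edges between vertices of the quotient iff between some representatives), with induced maps $f_K,f_H$. Bilabelled graph: $(K,\mathbf{a},\mathbf{b})$, $\mathbf{a}\in V(K)^k$, $\mathbf{b}\in V(K)^l$, up to isomorphism preserving tuples; $\mathscr{C}(k,l)$ those in $\mathscr{C}$ with $k$ inputs, $l$ outputs. Operations: $f$-union $(K,\mathbf{a},\mathbf{b})\cup_f(H,\mathbf{c},\mathbf{d})=(K\cup_fH,f_K(\mathbf{a})f_H(\mathbf{c}),f_K(\mathbf{b})f_H(\mathbf{d}))$; composition (for $|\mathbf{b}|=|\mathbf{c}|$) $(H,\mathbf{c},\mathbf{d})\cdot(K,\mathbf{a},\mathbf{b})=(H\cdot K,\mathbf{a},\mathbf{d})$ with $H\cdot K$ the quotient of $K\sqcup H$ identifying $b_i$ with $c_i$; involution swaps the tuples. $\ker\mathbf{b}$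 is the partition of positions by equal entries. A skew graph category is a set of bilabelled graphs containing $(N_0,\emptyset,\emptyset)$, $(M,(v),(v))$, $(M,\emptyset,(v,v))$ ($M$ the one-vertex loopless graph with vertex $v$), closed under all $f$-unions, under compositions $\mathbf{H}\cdot\mathbf{K}$ with $\mathbf{K}=(K,\mathbf{a},\mathbf{b}),\mathbf{H}=(H,\mathbf{c},\mathbf{d})$, $\ker\mathbf{b}=\ker\mathbf{c}$, and under involution. With the vertices of $G$ labelled $1,\dots,n$, for a bilabelled graph $\mathbf{K}=(K,\mathbf{a},\mathbf{b})$ the map $\hat T^G_{\mathbf{K}}\colon(\mathbb{C}^n)^{\otimes k}\to(\mathbb{C}^n)^{\otimes l}$ has entries $[\hat T^G_{\mathbf{K}}]_{\mathbf{j}\mathbf{i}}=\#\{\phi\colon K\to G\text{ injective homomorphism}\mid\phi(\mathbf{a})=\mathbf{i},\phi(\mathbf{b})=\mathbf{j}\}$, and $\mathscr{C}^G(k,l):=\mathrm{span}\{\hat T^G_{\mathbf{K}}\mid\mathbf{K}\in\mathscr{C}(k,l)\}$. $W_G(k,l):=(V(G)^k\times V(G)^l)/\mathrm{Aut}\,G$ (diagonal action), with classes $[\mathbf{a},\mathbf{b}]$; $\hat T^{\mathbf{a}\mathbf{b}}_G:=\hat T^G_{(G,\mathbf{a},\mathbf{b})}$, which depends only on $[\mathbf{a},\mathbf{b}]$; and $W^{\mathscr{C}}_G(k,l):=\{[\mathbf{a},\mathbf{b}]\in W_G(k,l)\mid(G,\mathbf{a},\mathbf{b})\in\mathscr{C}(k,l)\}$.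 *)

theory Defs
  imports Complex_Main "HOL-Library.FuncSet" "HOL-Library.Function_Algebras"
begin

record graph =
  verts :: "nat set"
  adj   :: "nat \<Rightarrow> nat \<Rightarrow> bool"

definition wf_graph :: "graph \<Rightarrow> bool" where
  "wf_graph K \<longleftrightarrow> finite (verts K)
     \<and> (\<forall>u v. adj K u v \<longrightarrow> u \<in> verts K \<and> v \<in> verts K)
     \<and> (\<forall>u v. adj K u v \<longrightarrow> adj K v u)"

text \<open>Bilabelled graph (K, inputs a, outputs b).\<close>
type_synonym bgraph = "graph \<times> nat list \<times> nat list"

definition wf_bgraph :: "bgraph \<Rightarrow> bool" where
  "wf_bgraph X \<longleftrightarrow> (case X of (K, a, b) \<Rightarrow>
     wf_graph K \<and> set a \<subseteq> verts K \<and> set b \<subseteq> verts K)"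

definition bgraph_iso :: "bgraph \<Rightarrow> bgraph \<Rightarrow> bool" where
  "bgraph_iso X Y \<longleftrightarrow> (case X of (K, a, b) \<Rightarrow> case Y of (K', a', b') \<Rightarrow>
     (\<exists>\<sigma>. bij_betw \<sigma> (verts K) (verts K')
        \<and> (\<forall>u\<in>verts K. \<forall>v\<in>verts K. adj K' (\<sigma> u) (\<sigma> v) \<longleftrightarrow> adj K u v)
        \<and> map \<sigma> a = a' \<and> map \<sigma> b = b'))"

definition vertex_overlap :: "graph \<Rightarrow> graph \<Rightarrow> (nat \<times> nat) set \<Rightarrow> bool" where
  "vertex_overlap K H f \<longleftrightarrow> f \<subseteq> verts K \<times> verts H
     \<and> (\<forall>v w w'. (v, w) \<in> f \<longrightarrow> (v, w') \<in> f \<longrightarrow> w = w')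
     \<and> (\<forall>v v' w. (v, w) \<in> f \<longrightarrow> (v', w) \<in> f \<longrightarrow> v = v')"

text \<open>X (with the induced maps gK, gH) is (a copy of) the quotient K \<union>_f H of the disjoint
  union of K and H identifying v with w for (v,w) in f; edges between quotient vertices
  iff between some representatives.\<close>
definition is_glue ::
  "graph \<Rightarrow> graph \<Rightarrow> (nat \<times> nat) set \<Rightarrow> graph \<Rightarrow> (nat \<Rightarrow> nat) \<Rightarrow> (nat \<Rightarrow> nat) \<Rightarrow> bool" where
  "is_glue K H f X gK gH \<longleftrightarrow> wf_graph X
     \<and> verts X = gK ` verts K \<union> gH ` verts H
     \<and> inj_on gK (verts K) \<and> inj_on gH (verts H)
     \<and> (\<forall>v\<in>verts K. \<forall>w\<in>verts H. gK v = gH w \<longleftrightarrow> (v, w) \<in> f)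
     \<and> (\<forall>x y. adj X x y \<longleftrightarrow>
          (\<exists>u\<in>verts K. \<exists>v\<in>verts K. adj K u v \<and> gK u = x \<and> gK v = y)
        \<or> (\<exists>u\<in>verts H. \<exists>v\<in>verts H. adj H u v \<and> gH u = x \<and> gH v = y))"

definition ker_eq :: "nat list \<Rightarrow> nat list \<Rightarrow> bool" where
  "ker_eq b c \<longleftrightarrow> length b = length c
     \<and> (\<forall>i<length b. \<forall>j<length b. b ! i = b ! j \<longleftrightarrow> c ! i = c ! j)"

definition N0 :: graph where "N0 = \<lparr>verts = {}, adj = (\<lambda>_ _. False)\<rparr>"
definition M1 :: graph where "M1 = \<lparr>verts = {0}, adj = (\<lambda>_ _. False)\<rparr>"

text \<open>Skew graph category. Bilabelled graphs are taken up to isomorphism, so a class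
  is represented by an isomorphism-closed set of concrete well-formed bilabelled graphs.\<close>
definition skew_graph_category :: "bgraph set \<Rightarrow> bool" where
  "skew_graph_category C \<longleftrightarrow>
     (\<forall>X\<in>C. wf_bgraph X)
   \<and> (\<forall>X Y. X \<in> C \<longrightarrow> wf_bgraph Y \<longrightarrow> bgraph_iso X Y \<longrightarrow> Y \<in> C)
   \<and> (N0, [], []) \<in> C \<and> (M1, [0], [0]) \<in> C \<and> (M1, [], [0, 0]) \<in> C
   \<and> (\<forall>K a b H c d f X gK gH. (K, a, b) \<in> C \<longrightarrow> (H, c, d) \<in> C
        \<longrightarrow> vertex_overlap K H f \<longrightarrow> is_glue K H f X gK gH
        \<longrightarrow> (X, map gK a @ map gH c, map gK b @ map gH d) \<in> C)
   \<and> (\<forall>K a b H c d X gK gH. (K, a, b) \<in> C \<longrightarrow> (H, c, d) \<in> C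
        \<longrightarrow> ker_eq b c \<longrightarrow> is_glue K H (set (zip b c)) X gK gH
        \<longrightarrow> (X, map gK a, map gH d) \<in> C)
   \<and> (\<forall>K a b. (K, a, b) \<in> C \<longrightarrow> (K, b, a) \<in> C)"

text \<open>Vertices of G index the coordinates directly; a map
  (C^n)^{\<otimes>k} \<rightarrow> (C^n)^{\<otimes>l} is its matrix, a function of (j, i).\<close>
definition T_hat :: "graph \<Rightarrow> bgraph \<Rightarrow> nat list \<times> nat list \<Rightarrow> complex" where
  "T_hat G X = (case X of (K, a, b) \<Rightarrow> (\<lambda>(j, i). of_nat (card
     {\<phi> \<in> verts K \<rightarrow>\<^sub>E verts G. inj_on \<phi> (verts K)
        \<and> (\<forall>u\<in>verts K. \<forall>v\<in>verts K. adj K u v \<longrightarrow> adj G (\<phi> u) (\<phi> v))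
        \<and> map \<phi> a = i \<and> map \<phi> b = j})))"

definition cscale :: "complex \<Rightarrow> ('x \<Rightarrow> complex) \<Rightarrow> ('x \<Rightarrow> complex)" where
  "cscale c f = (\<lambda>x. c * f x)"

definition cspan :: "('x \<Rightarrow> complex) set \<Rightarrow> ('x \<Rightarrow> complex) set" where
  "cspan S = module.span cscale S"

definition cindependent :: "('x \<Rightarrow> complex) set \<Rightarrow> bool" where
  "cindependent S \<longleftrightarrow> \<not> module.dependent cscale S"

definition CG :: "graph \<Rightarrow> bgraph set \<Rightarrow> nat \<Rightarrow> nat \<Rightarrow> (nat list \<times> nat list \<Rightarrow> complex) set" where
  "CG G C k l = cspan {T_hat G (K, a, b) | K a b. (K, a, b) \<in> C \<and> length a = k \<and> length b = l}"

definition Aut :: "graph \<Rightarrow> (nat \<Rightarrow> nat) set" where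
  "Aut G = {\<sigma>. bij_betw \<sigma> (verts G) (verts G)
     \<and> (\<forall>u\<in>verts G. \<forall>v\<in>verts G. adj G (\<sigma> u) (\<sigma> v) \<longleftrightarrow> adj G u v)}"

text \<open>Representatives (a,b) of classes [a,b] in W^C_G(k,l).\<close>
definition WC_reps :: "graph \<Rightarrow> bgraph set \<Rightarrow> nat \<Rightarrow> nat \<Rightarrow> (nat list \<times> nat list) set" where
  "WC_reps G C k l = {(a, b). length a = k \<and> length b = l
     \<and> set a \<subseteq> verts G \<and> set b \<subseteq> verts G \<and> (G, a, b) \<in> C}"

end

(* Gluing (K, a, b) onto (G, [], []) along an injective homomorphism \<phi>: K \<rightarrow> G yields
   (G, \<phi> a, \<phi> b), so this bilabelled graph lies in C. Counting the pairs (\<phi>, \<psi>) with \<psi> an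
   injective endomorphism (hence automorphism) of G gives
   card (End G) * T(K, a, b) = sum over \<phi> of T(G, \<phi> a, \<phi> b), so these maps span.
   They are independent because T(G, a', b') is nonzero at the point (b, a) only if some
   automorphism maps (a', b') to (a, b), and then T(G, a', b') = T(G, a, b): each basis
   map has a point at which all the others vanish. *)

theory Submission
  imports Defs
begin

definition inj_homs :: "graph \<Rightarrow> graph \<Rightarrow> (nat \<Rightarrow> nat) set" where
  "inj_homs K G = {\<phi> \<in> verts K \<rightarrow>\<^sub>E verts G. inj_on \<phi> (verts K)
        \<and> (\<forall>u\<in>verts K. \<forall>v\<in>verts K. adj K u v \<longrightarrow> adj G (\<phi> u) (\<phi> v))}"

lemma T_hat_eq_card:
  "T_hat G (K, a, b) (j, i) = of_nat (card {\<phi> \<in> inj_homs K G. map \<phi> a = i \<and> map \<phi> b = j})"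
  unfolding T_hat_def inj_homs_def by (simp add: conj_assoc)

lemma inj_homs_into: "\<phi> \<in> inj_homs K G \<Longrightarrow> x \<in> verts K \<Longrightarrow> \<phi> x \<in> verts G"
  unfolding inj_homs_def by auto

lemma finite_inj_homs: "wf_graph G \<Longrightarrow> finite (verts K) \<Longrightarrow> finite (inj_homs K G)"
  unfolding inj_homs_def wf_graph_def
  by (rule finite_subset[of _ "verts K \<rightarrow>\<^sub>E verts G"]) (auto intro: finite_PiE)

lemma restrict_id_in_inj_homs: "restrict id (verts G) \<in> inj_homs G G"
  unfolding inj_homs_def by (auto simp: inj_on_def)

lemma restrict_comp_in_inj_homs:
  assumes "\<phi> \<in> inj_homs K H" "\<psi> \<in> inj_homs H G"
  shows "restrict (\<psi> \<circ> \<phi>) (verts K) \<in> inj_homs K G"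
proof -
  have into: "\<phi> ` verts K \<subseteq> verts H" using assms(1) inj_homs_into by blast
  have "inj_on (\<psi> \<circ> \<phi>) (verts K)"
    using assms into unfolding inj_homs_def by (auto intro!: comp_inj_on inj_on_subset[of \<psi> "verts H"])
  moreover have "\<forall>u\<in>verts K. \<forall>v\<in>verts K. adj K u v \<longrightarrow> adj G (\<psi> (\<phi> u)) (\<psi> (\<phi> v))"
    using assms into unfolding inj_homs_def by blast
  ultimately show ?thesis using assms into unfolding inj_homs_def by (auto simp: inj_on_def)
qed

lemma inj_on_comp_left_inj_homs:
  assumes "\<psi> \<in> inj_homs H G"
  shows "inj_on (\<lambda>\<phi>. restrict (\<psi> \<circ> \<phi>) (verts K)) (inj_homs K H)"
proof (rule inj_onI)
  fix \<phi> \<phi>' assume \<phi>: "\<phi> \<in> inj_homs K H" "\<phi>' \<in> inj_homs K H"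
    and eq: "restrict (\<psi> \<circ> \<phi>) (verts K) = restrict (\<psi> \<circ> \<phi>') (verts K)"
  show "\<phi> = \<phi>'"
  proof (rule extensionalityI)
    show "\<phi> \<in> extensional (verts K)" "\<phi>' \<in> extensional (verts K)"
      using \<phi> unfolding inj_homs_def by (auto simp: PiE_def)
  next
    fix x assume x: "x \<in> verts K"
    have "\<psi> (\<phi> x) = \<psi> (\<phi>' x)" using fun_cong[OF eq, of x] x by simp
    moreover have "inj_on \<psi> (verts H)" using assms unfolding inj_homs_def by auto
    ultimately show "\<phi> x = \<phi>' x"
      using inj_homs_into[OF \<phi>(1) x] inj_homs_into[OF \<phi>(2) x] by (auto dest: inj_onD)
  qed
qed

lemma inj_endo_image_eq:
  assumes "wf_graph G" "\<psi> \<in> inj_homs G G"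
  shows "\<psi> ` verts G = verts G"
  using assms unfolding inj_homs_def wf_graph_def by (intro endo_inj_surj) auto

lemma inj_on_comp_right_inj_endos:
  assumes "wf_graph G" "\<psi> \<in> inj_homs G G"
  shows "inj_on (\<lambda>\<phi>. restrict (\<phi> \<circ> \<psi>) (verts G)) (inj_homs G G)"
proof (rule inj_onI)
  fix \<phi> \<phi>' assume \<phi>: "\<phi> \<in> inj_homs G G" "\<phi>' \<in> inj_homs G G"
    and eq: "restrict (\<phi> \<circ> \<psi>) (verts G) = restrict (\<phi>' \<circ> \<psi>) (verts G)"
  show "\<phi> = \<phi>'"
  proof (rule extensionalityI)
    show "\<phi> \<in> extensional (verts G)" "\<phi>' \<in> extensional (verts G)"
      using \<phi> unfolding inj_homs_def by (auto simp: PiE_def)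
  next
    fix y assume "y \<in> verts G"
    then obtain x where "x \<in> verts G" "y = \<psi> x" using inj_endo_image_eq[OF assms] by blast
    then show "\<phi> y = \<phi>' y" using fun_cong[OF eq, of x] by simp
  qed
qed

text \<open>An injective endomorphism of a finite graph permutes the finitely many edges, so it
  also reflects adjacency.\<close>
lemma inj_endo_in_Aut:
  assumes G: "wf_graph G" and \<psi>: "\<psi> \<in> inj_homs G G"
  shows "\<psi> \<in> Aut G"
proof -
  have inj: "inj_on \<psi> (verts G)" using \<psi> unfolding inj_homs_def by auto
  let ?E = "{(u, v). adj G u v}" and ?h = "\<lambda>(u, v). (\<psi> u, \<psi> v)"
  have EV: "?E \<subseteq> verts G \<times> verts G" using G unfolding wf_graph_def by auto
  have "?h ` ?E = ?E"
  proof (rule endo_inj_surj)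
    show "finite ?E" using G unfolding wf_graph_def by (intro finite_subset[OF EV]) simp
    show "?h ` ?E \<subseteq> ?E" using \<psi> EV unfolding inj_homs_def by auto
    show "inj_on ?h ?E" using EV inj by (auto simp: inj_on_def)
  qed
  have "adj G u v" if uv: "u \<in> verts G" "v \<in> verts G" and "adj G (\<psi> u) (\<psi> v)" for u v
  proof -
    have "(\<psi> u, \<psi> v) \<in> ?h ` ?E" using \<open>?h ` ?E = ?E\<close> that(3) by simp
    then obtain u' v' where "adj G u' v'" "\<psi> u' = \<psi> u" "\<psi> v' = \<psi> v" by auto
    moreover from this have "u' = u" "v' = v" using EV uv inj by (auto dest: inj_onD)
    ultimately show ?thesis by simp
  qed
  moreover have "bij_betw \<psi> (verts G) (verts G)"
    using inj_endo_image_eq[OF G \<psi>] inj by (simp add: bij_betw_def)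
  ultimately show ?thesis using \<psi> unfolding Aut_def inj_homs_def by auto
qed

lemma card_filter_comp_perm:
  assumes "finite S" "inj_on h S" "h ` S \<subseteq> S"
  shows "card {x\<in>S. P (h x)} = card {x\<in>S. P x}"
proof -
  have "{x\<in>S. P x} = h ` {x\<in>S. P (h x)}" using endo_inj_surj[OF assms(1,3,2)] by auto
  moreover have "inj_on h {x\<in>S. P (h x)}" using assms(2) by (rule inj_on_subset) auto
  ultimately show ?thesis by (simp add: card_image)
qed

lemma map_restrict_comp:
  "set xs \<subseteq> A \<Longrightarrow> map (restrict (f \<circ> g) A) xs = map f (map g xs)"
  by (auto intro!: map_cong)

lemma T_hat_relabel_inj_endo:
  assumes G: "wf_graph G" and \<psi>: "\<psi> \<in> inj_homs G G"
    and ab: "set a \<subseteq> verts G" "set b \<subseteq> verts G"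
  shows "T_hat G (G, map \<psi> a, map \<psi> b) = T_hat G (G, a, b)"
proof (rule ext, clarify)
  fix j i
  let ?h = "\<lambda>\<phi>. restrict (\<phi> \<circ> \<psi>) (verts G)"
  have "card {\<phi> \<in> inj_homs G G. map (?h \<phi>) a = i \<and> map (?h \<phi>) b = j}
      = card {\<phi> \<in> inj_homs G G. map \<phi> a = i \<and> map \<phi> b = j}"
  proof (rule card_filter_comp_perm)
    show "finite (inj_homs G G)" using finite_inj_homs G by (simp add: wf_graph_def)
    show "inj_on ?h (inj_homs G G)" by (rule inj_on_comp_right_inj_endos[OF G \<psi>])
    show "?h ` inj_homs G G \<subseteq> inj_homs G G" using restrict_comp_in_inj_homs[OF \<psi>] by blast
  qed
  then show "T_hat G (G, map \<psi> a, map \<psi> b) (j, i) = T_hat G (G, a, b) (j, i)"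
    by (simp add: T_hat_eq_card map_restrict_comp[OF ab(1)] map_restrict_comp[OF ab(2)])
qed

text \<open>Both sides count the pairs (\<phi>, \<psi>) with \<psi> \<circ> \<phi> mapping the labels to (i, j); the right
  side because composing with a fixed \<psi> permutes the injective homomorphisms from K.\<close>
lemma double_count_inj_homs:
  assumes G: "wf_graph G" and K: "finite (verts K)"
    and ab: "set a \<subseteq> verts K" "set b \<subseteq> verts K"
  shows "(\<Sum>\<phi>\<in>inj_homs K G.
            card {\<psi>\<in>inj_homs G G. map \<psi> (map \<phi> a) = i \<and> map \<psi> (map \<phi> b) = j})
    = card (inj_homs G G) * card {\<phi>\<in>inj_homs K G. map \<phi> a = i \<and> map \<phi> b = j}"
proof -
  let ?E = "inj_homs G G" and ?H = "inj_homs K G"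
  let ?Q = "\<lambda>\<psi> \<phi>. map \<psi> (map \<phi> a) = i \<and> map \<psi> (map \<phi> b) = j"
  have fin: "finite ?E" "finite ?H" using finite_inj_homs G K by (auto simp: wf_graph_def)
  have "(\<Sum>\<phi>\<in>?H. card {\<psi>\<in>?E. ?Q \<psi> \<phi>}) = (\<Sum>\<phi>\<in>?H. \<Sum>\<psi>\<in>?E. if ?Q \<psi> \<phi> then 1 else 0)"
    using fin by (simp add: sum.inter_filter[symmetric])
  also have "\<dots> = (\<Sum>\<psi>\<in>?E. \<Sum>\<phi>\<in>?H. if ?Q \<psi> \<phi> then 1 else 0)"
    by (rule sum.swap)
  also have "\<dots> = (\<Sum>\<psi>\<in>?E. card {\<phi>\<in>?H. ?Q \<psi> \<phi>})"
    using fin by (simp add: sum.inter_filter[symmetric])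
  also have "\<dots> = (\<Sum>\<psi>\<in>?E. card {\<phi>\<in>?H. map \<phi> a = i \<and> map \<phi> b = j})"
  proof (rule sum.cong[OF refl])
    fix \<psi> assume \<psi>: "\<psi> \<in> ?E"
    let ?h = "\<lambda>\<phi>. restrict (\<psi> \<circ> \<phi>) (verts K)"
    have "card {\<phi>\<in>?H. map (?h \<phi>) a = i \<and> map (?h \<phi>) b = j}
        = card {\<phi>\<in>?H. map \<phi> a = i \<and> map \<phi> b = j}"
    proof (rule card_filter_comp_perm)
      show "inj_on ?h ?H" by (rule inj_on_comp_left_inj_homs[OF \<psi>])
      show "?h ` ?H \<subseteq> ?H" using restrict_comp_in_inj_homs[OF _ \<psi>] by blast
    qed (use fin in auto)
    then show "card {\<phi>\<in>?H. ?Q \<psi> \<phi>} = card {\<phi>\<in>?H. map \<phi> a = i \<and> map \<phi> b = j}"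
      by (simp add: map_restrict_comp[OF ab(1)] map_restrict_comp[OF ab(2)])
  qed
  finally show ?thesis by simp
qed

lemma sum_apply: "(\<Sum>x\<in>S. f x) y = (\<Sum>x\<in>S. f x y)"
  by (induction S rule: infinite_finite_induct) auto

lemma T_hat_eq_sum_relabellings:
  assumes G: "wf_graph G" and K: "finite (verts K)"
    and ab: "set a \<subseteq> verts K" "set b \<subseteq> verts K"
  shows "T_hat G (K, a, b) = (\<Sum>\<phi>\<in>inj_homs K G.
           cscale (1 / of_nat (card (inj_homs G G))) (T_hat G (G, map \<phi> a, map \<phi> b)))"
proof (rule ext, clarify)
  fix j i
  let ?c = "1 / of_nat (card (inj_homs G G)) :: complex"
  have "card (inj_homs G G) \<noteq> 0"
    using finite_inj_homs G restrict_id_in_inj_homs by (metis card_0_eq empty_iff wf_graph_def)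
  have "(\<Sum>\<phi>\<in>inj_homs K G. cscale ?c (T_hat G (G, map \<phi> a, map \<phi> b))) (j, i)
      = ?c * of_nat (\<Sum>\<phi>\<in>inj_homs K G.
          card {\<psi>\<in>inj_homs G G. map \<psi> (map \<phi> a) = i \<and> map \<psi> (map \<phi> b) = j})"
    by (simp only: sum_apply cscale_def T_hat_eq_card of_nat_sum sum_distrib_left)
  also have "\<dots> = T_hat G (K, a, b) (j, i)"
    unfolding double_count_inj_homs[OF G K ab] T_hat_eq_card
    using \<open>card (inj_homs G G) \<noteq> 0\<close> by simp
  finally show "T_hat G (K, a, b) (j, i) = (\<Sum>\<phi>\<in>inj_homs K G.
           cscale ?c (T_hat G (G, map \<phi> a, map \<phi> b))) (j, i)" ..
qed

lemma T_hat_nonzero_iff: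
  assumes "wf_graph G" "finite (verts K)"
  shows "T_hat G (K, a, b) (j, i) \<noteq> 0 \<longleftrightarrow> (\<exists>\<phi>\<in>inj_homs K G. map \<phi> a = i \<and> map \<phi> b = j)"
  using finite_inj_homs[OF assms] by (auto simp: T_hat_eq_card)

lemma T_hat_self_nonzero:
  assumes "wf_graph G" "set a \<subseteq> verts G" "set b \<subseteq> verts G"
  shows "T_hat G (G, a, b) (b, a) \<noteq> 0"
proof -
  have "map (restrict id (verts G)) a = a" "map (restrict id (verts G)) b = b"
    using assms by (auto intro!: map_idI)
  then show ?thesis
    using assms restrict_id_in_inj_homs T_hat_nonzero_iff[of G G] by (auto simp: wf_graph_def)
qed

lemma T_hat_eq_if_nonzero_at:
  assumes G: "wf_graph G" and ab': "set a' \<subseteq> verts G" "set b' \<subseteq> verts G"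
    and "T_hat G (G, a', b') (b, a) \<noteq> 0"
  shows "T_hat G (G, a', b') = T_hat G (G, a, b)"
proof -
  obtain \<psi> where "\<psi> \<in> inj_homs G G" "map \<psi> a' = a" "map \<psi> b' = b"
    using assms(4) T_hat_nonzero_iff G by (auto simp: wf_graph_def)
  then show ?thesis using T_hat_relabel_inj_endo[OF G _ ab'] by metis
qed

lemma T_hat_eq_imp_Aut_orbit:
  assumes G: "wf_graph G" and "set a' \<subseteq> verts G" "set b' \<subseteq> verts G"
    and "T_hat G (G, a, b) = T_hat G (G, a', b')"
  shows "\<exists>\<sigma>\<in>Aut G. map \<sigma> a = a' \<and> map \<sigma> b = b'"
proof -
  have "T_hat G (G, a, b) (b', a') \<noteq> 0" using assms T_hat_self_nonzero by metis
  then obtain \<psi> where "\<psi> \<in> inj_homs G G" "map \<psi> a = a'" "map \<psi> b = b'"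
    using T_hat_nonzero_iff G by (auto simp: wf_graph_def)
  then show ?thesis using inj_endo_in_Aut[OF G] by blast
qed

lemma module_cscale: "module (cscale :: complex \<Rightarrow> ('x \<Rightarrow> complex) \<Rightarrow> _)"
  by unfold_locales (auto simp: cscale_def algebra_simps fun_eq_iff)

lemma cindependent_if_separating_points:
  assumes "\<forall>v\<in>S. \<exists>x. v x \<noteq> 0 \<and> (\<forall>w\<in>S. w \<noteq> v \<longrightarrow> w x = 0)"
  shows "cindependent S"
  unfolding cindependent_def module.dependent_explicit[OF module_cscale]
proof clarify
  fix t u v
  assume t: "finite t" "t \<subseteq> S" and sum0: "(\<Sum>w\<in>t. cscale (u w) w) = 0"
    and v: "v \<in> t" "u v \<noteq> 0"
  obtain x where x: "v x \<noteq> 0" "\<forall>w\<in>S. w \<noteq> v \<longrightarrow> w x = 0" using assms v t by blast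
  have "0 = (\<Sum>w\<in>t. u w * w x)" using fun_cong[OF sum0, of x] by (simp add: sum_apply cscale_def)
  also have "\<dots> = (\<Sum>w\<in>t. if w = v then u v * v x else 0)"
    using x t by (intro sum.cong) auto
  also have "\<dots> = u v * v x" using t v by simp
  finally show False using x v by simp
qed

lemma cindependent_T_hat_labellings:
  assumes G: "wf_graph G" and R: "\<forall>(a, b)\<in>R. set a \<subseteq> verts G \<and> set b \<subseteq> verts G"
  shows "cindependent ((\<lambda>(a, b). T_hat G (G, a, b)) ` R)"
proof (rule cindependent_if_separating_points, clarify)
  fix a b assume "(a, b) \<in> R"
  then have ab: "set a \<subseteq> verts G" "set b \<subseteq> verts G" using R by auto
  have "w (b, a) = 0"
    if w: "w \<in> (\<lambda>(a, b). T_hat G (G, a, b)) ` R" "w \<noteq> T_hat G (G, a, b)" for w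
  proof -
    obtain a' b' where "(a', b') \<in> R" "w = T_hat G (G, a', b')" using w(1) by auto
    then show ?thesis using T_hat_eq_if_nonzero_at[OF G, of a' b' b a] R w(2) by fastforce
  qed
  then show "\<exists>x. T_hat G (G, a, b) x \<noteq> 0 \<and> (\<forall>w\<in>(\<lambda>(a, b). T_hat G (G, a, b)) ` R.
            w \<noteq> T_hat G (G, a, b) \<longrightarrow> w x = 0)"
    using T_hat_self_nonzero[OF G ab] by blast
qed

lemma skew_graph_category_wf_bgraph:
  "skew_graph_category C \<Longrightarrow> X \<in> C \<Longrightarrow> wf_bgraph X"
  unfolding skew_graph_category_def by (elim conjE) (erule bspec, assumption)

lemma skew_graph_category_union:
  assumes "skew_graph_category C" "(K, a, b) \<in> C" "(H, c, d) \<in> C"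
    and "vertex_overlap K H f" "is_glue K H f X gK gH"
  shows "(X, map gK a @ map gH c, map gK b @ map gH d) \<in> C"
proof -
  have "\<forall>K a b H c d f X gK gH. (K, a, b) \<in> C \<longrightarrow> (H, c, d) \<in> C
        \<longrightarrow> vertex_overlap K H f \<longrightarrow> is_glue K H f X gK gH
        \<longrightarrow> (X, map gK a @ map gH c, map gK b @ map gH d) \<in> C"
    using assms(1) unfolding skew_graph_category_def by (elim conjE)
  then show ?thesis using assms(2-) by blast
qed

lemma is_glue_along_inj_hom:
  assumes G: "wf_graph G" and \<phi>: "\<phi> \<in> inj_homs K G"
  shows "vertex_overlap K G ((\<lambda>v. (v, \<phi> v)) ` verts K)"
    and "is_glue K G ((\<lambda>v. (v, \<phi> v)) ` verts K) G \<phi> id"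
proof -
  have inj: "inj_on \<phi> (verts K)" and into: "\<phi> ` verts K \<subseteq> verts G"
    using \<phi> inj_homs_into unfolding inj_homs_def by auto
  show "vertex_overlap K G ((\<lambda>v. (v, \<phi> v)) ` verts K)"
    unfolding vertex_overlap_def using into inj by (auto dest: inj_onD)
  show "is_glue K G ((\<lambda>v. (v, \<phi> v)) ` verts K) G \<phi> id"
    unfolding is_glue_def
  proof (intro conjI allI)
    fix x y
    show "adj G x y \<longleftrightarrow> (\<exists>u\<in>verts K. \<exists>v\<in>verts K. adj K u v \<and> \<phi> u = x \<and> \<phi> v = y)
        \<or> (\<exists>u\<in>verts G. \<exists>v\<in>verts G. adj G u v \<and> id u = x \<and> id v = y)"
      using G \<phi> unfolding wf_graph_def inj_homs_def by auto
  qed (use G into inj in auto)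
qed

lemma relabel_in_skew_graph_category:
  assumes C: "skew_graph_category C" and KC: "(K, a, b) \<in> C" and GC: "(G, [], []) \<in> C"
    and G: "wf_graph G" and \<phi>: "\<phi> \<in> inj_homs K G"
  shows "(G, map \<phi> a, map \<phi> b) \<in> C"
  using skew_graph_category_union[OF C KC GC is_glue_along_inj_hom[OF G \<phi>]] by simp

lemma T_hat_in_span_relabellings:
  assumes G: "wf_graph G" and K: "finite (verts K)"
    and ab: "set a \<subseteq> verts K" "set b \<subseteq> verts K"
  shows "T_hat G (K, a, b) \<in> cspan ((\<lambda>\<phi>. T_hat G (G, map \<phi> a, map \<phi> b)) ` inj_homs K G)"
proof -
  interpret module "cscale :: complex \<Rightarrow> (nat list \<times> nat list \<Rightarrow> complex) \<Rightarrow> _"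
    by (rule module_cscale)
  show ?thesis
    unfolding cspan_def T_hat_eq_sum_relabellings[OF G K ab]
    by (intro span_sum span_scale span_base) simp
qed

lemma T_hat_in_span_WC_reps:
  assumes G: "wf_graph G" and C: "skew_graph_category C" and GC: "(G, [], []) \<in> C"
    and KC: "(K, a, b) \<in> C" and "length a = k" "length b = l"
  shows "T_hat G (K, a, b) \<in> cspan ((\<lambda>(a, b). T_hat G (G, a, b)) ` WC_reps G C k l)"
proof -
  interpret module "cscale :: complex \<Rightarrow> (nat list \<times> nat list \<Rightarrow> complex) \<Rightarrow> _"
    by (rule module_cscale)
  have K: "finite (verts K)" "set a \<subseteq> verts K" "set b \<subseteq> verts K"
    using skew_graph_category_wf_bgraph[OF C KC] unfolding wf_bgraph_def wf_graph_def by auto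
  have "(map \<phi> a, map \<phi> b) \<in> WC_reps G C k l" if "\<phi> \<in> inj_homs K G" for \<phi>
    using that K assms(5,6) inj_homs_into relabel_in_skew_graph_category[OF C KC GC G that]
    unfolding WC_reps_def by auto
  then have "(\<lambda>\<phi>. T_hat G (G, map \<phi> a, map \<phi> b)) ` inj_homs K G
      \<subseteq> (\<lambda>(a, b). T_hat G (G, a, b)) ` WC_reps G C k l"
    by (auto intro: rev_image_eqI)
  then show ?thesis
    using T_hat_in_span_relabellings[OF G K] span_mono unfolding cspan_def by blast
qed

theorem proposition4p13:
  fixes G :: graph and C :: "bgraph set" and k l :: nat
  assumes "wf_graph G"
    and "skew_graph_category C"
    and "(G, [], []) \<in> C"
  shows "cindependent ((\<lambda>(a, b). T_hat G (G, a, b)) ` WC_reps G C k l)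
    \<and> cspan ((\<lambda>(a, b). T_hat G (G, a, b)) ` WC_reps G C k l) = CG G C k l
    \<and> (\<forall>(a, b)\<in>WC_reps G C k l. \<forall>(a', b')\<in>WC_reps G C k l.
          T_hat G (G, a, b) = T_hat G (G, a', b')
          \<longrightarrow> (\<exists>\<sigma>\<in>Aut G. map \<sigma> a = a' \<and> map \<sigma> b = b'))"
proof -
  note G = assms(1) and C = assms(2) and GC = assms(3)
  interpret module "cscale :: complex \<Rightarrow> (nat list \<times> nat list \<Rightarrow> complex) \<Rightarrow> _"
    by (rule module_cscale)
  let ?S = "(\<lambda>(a, b). T_hat G (G, a, b)) ` WC_reps G C k l"
  let ?gens = "{T_hat G (K, a, b) | K a b. (K, a, b) \<in> C \<and> length a = k \<and> length b = l}"
  have "?S \<subseteq> ?gens" unfolding WC_reps_def by auto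
  moreover have "?gens \<subseteq> span ?S"
    using T_hat_in_span_WC_reps[OF G C GC] unfolding cspan_def by blast
  ultimately have "cspan ?S = CG G C k l"
    unfolding cspan_def CG_def by (intro subset_antisym span_mono span_minimal) simp_all
  moreover have "cindependent ?S"
    using G by (rule cindependent_T_hat_labellings) (auto simp: WC_reps_def)
  moreover have "\<forall>(a, b)\<in>WC_reps G C k l. \<forall>(a', b')\<in>WC_reps G C k l.
          T_hat G (G, a, b) = T_hat G (G, a', b') \<longrightarrow> (\<exists>\<sigma>\<in>Aut G. map \<sigma> a = a' \<and> map \<sigma> b = b')"
    using T_hat_eq_imp_Aut_orbit[OF G] by (auto simp: WC_reps_def)
  ultimately show ?thesis by blast
qed

end
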